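(* Let $M$ be a triangulated compact 3-manifold, possibly with boundary, with $t$ tetrahedra, and let $\mathcal{C}_M\subset\mathbb{R}^{7t}$ be its Haken normal cone. (1) $\mathcal{C}_M$ has at most $2^{7t}$ minimal vertex solutions. (2) The minimal Hilbert basis of $\mathcal{C}_M$ has at most $t^{7t}\,2^{49t^2+14t}$ elements.
   Context: Coordinates of $\mathbb{R}^{7t}$ are indexed by pairs (tetrahedron, elementary normal disk type), with 7 types per tetrahedron (4 triangle types separating one vertex from three, 3 quadrilateral types separating two vertices from two). The Haken normal cone $\mathcal{C}_M$ consists of the $v$ with all $v_i\ge0$ satisfying the matching equations: for each face shared by two tetrahedra and each pair of sides of that face, the sum of the coordinates of disk types in one tetrahedron meeting the face in an arc joining that pair of sides equals the corresponding sum in the other tetrahedron. A minimal vertex solution is the smallest nonzero integer point on an extreme ray of $\mathcal{C}_M$. The minimal Hilbert basis is the set of nonzero $v\in\mathcal{C}_M\cap\mathbb{Z}^{7t}$ not expressible as a sum of two nonzero elements of $\mathcal{C}_M\cap\mathbb{Z}^{7t}$. *)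

theory Defs
  imports Complex_Main
begin

(* Tetrahedra are numbered 0..<t, vertices of each tetrahedron 0..<4.
   Face f of a tetrahedron (f < 4) is the face opposite vertex f.
   gl i f = Some (j, s) : face f of tetrahedron i is glued to face (s f)
   of tetrahedron j, vertex k of tetrahedron i (k <> f) going to vertex s k
   of tetrahedron j.  gl i f = None : face f of tetrahedron i is a
   boundary face.
   --------------------------------------------------------------------- *)

type_synonym gluing = "nat \<Rightarrow> nat \<Rightarrow> (nat \<times> (nat \<Rightarrow> nat)) option"

definition valid_gluing :: "nat \<Rightarrow> gluing \<Rightarrow> bool" where
  "valid_gluing t gl \<longleftrightarrow>
     (\<forall>i<t. \<forall>f<4. \<forall>j s. gl i f = Some (j, s) \<longrightarrow>
        j < t \<and> bij_betw s {..<4} {..<4} \<and> (j, s f) \<noteq> (i, f) \<and>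
        (\<exists>r. gl j (s f) = Some (i, r) \<and> (\<forall>k<4. r (s k) = k)))"

definition vstep :: "nat \<Rightarrow> gluing \<Rightarrow> nat \<times> nat \<Rightarrow> nat \<times> nat \<Rightarrow> bool" where
  "vstep t gl x y \<longleftrightarrow> (case x of (i, a) \<Rightarrow> case y of (j, b) \<Rightarrow>
      i < t \<and> a < 4 \<and> (\<exists>f<4. \<exists>s. f \<noteq> a \<and> gl i f = Some (j, s) \<and> s a = b))"

definition vert_eq :: "nat \<Rightarrow> gluing \<Rightarrow> nat \<times> nat \<Rightarrow> nat \<times> nat \<Rightarrow> bool" where
  "vert_eq t gl = (symclp (vstep t gl))\<^sup>*\<^sup>*"

(* identification of oriented edges (tetrahedron, from-vertex, to-vertex);
   these are also the vertices of the vertex links *)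
definition estep :: "nat \<Rightarrow> gluing \<Rightarrow> nat \<times> nat \<times> nat \<Rightarrow> nat \<times> nat \<times> nat \<Rightarrow> bool" where
  "estep t gl x y \<longleftrightarrow> (case x of (i, a, b) \<Rightarrow> case y of (j, c, d) \<Rightarrow>
      i < t \<and> a < 4 \<and> b < 4 \<and> a \<noteq> b \<and>
      (\<exists>f<4. \<exists>s. f \<noteq> a \<and> f \<noteq> b \<and> gl i f = Some (j, s) \<and> s a = c \<and> s b = d))"

definition edge_eq :: "nat \<Rightarrow> gluing \<Rightarrow> nat \<times> nat \<times> nat \<Rightarrow> nat \<times> nat \<times> nat \<Rightarrow> bool" where
  "edge_eq t gl = (symclp (estep t gl))\<^sup>*\<^sup>*"

(* identification of edges of vertex links: (tetrahedron, corner vertex b,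
   face f with f <> b) is the edge of the link triangle at corner b lying
   in face f *)
definition lestep :: "nat \<Rightarrow> gluing \<Rightarrow> nat \<times> nat \<times> nat \<Rightarrow> nat \<times> nat \<times> nat \<Rightarrow> bool" where
  "lestep t gl x y \<longleftrightarrow> (case x of (i, b, f) \<Rightarrow> case y of (j, c, g) \<Rightarrow>
      i < t \<and> b < 4 \<and> f < 4 \<and> b \<noteq> f \<and>
      (\<exists>s. gl i f = Some (j, s) \<and> s b = c \<and> s f = g))"

definition ledge_eq :: "nat \<Rightarrow> gluing \<Rightarrow> nat \<times> nat \<times> nat \<Rightarrow> nat \<times> nat \<times> nat \<Rightarrow> bool" where
  "ledge_eq t gl = (symclp (lestep t gl))\<^sup>*\<^sup>*"

definition link_triangles :: "nat \<Rightarrow> gluing \<Rightarrow> nat \<times> nat \<Rightarrow> (nat \<times> nat) set" where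
  "link_triangles t gl v = {(j, b). j < t \<and> b < 4 \<and> vert_eq t gl v (j, b)}"

definition link_vertices :: "nat \<Rightarrow> gluing \<Rightarrow> nat \<times> nat \<Rightarrow> (nat \<times> nat \<times> nat) set set" where
  "link_vertices t gl v = (\<lambda>x. Collect (edge_eq t gl x)) `
      {(j, b, w). (j, b) \<in> link_triangles t gl v \<and> w < 4 \<and> w \<noteq> b}"

definition link_edges :: "nat \<Rightarrow> gluing \<Rightarrow> nat \<times> nat \<Rightarrow> (nat \<times> nat \<times> nat) set set" where
  "link_edges t gl v = (\<lambda>x. Collect (ledge_eq t gl x)) `
      {(j, b, f). (j, b) \<in> link_triangles t gl v \<and> f < 4 \<and> f \<noteq> b}"

definition link_euler :: "nat \<Rightarrow> gluing \<Rightarrow> nat \<times> nat \<Rightarrow> int" where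
  "link_euler t gl v = int (card (link_vertices t gl v)) - int (card (link_edges t gl v))
                       + int (card (link_triangles t gl v))"

definition link_has_boundary :: "nat \<Rightarrow> gluing \<Rightarrow> nat \<times> nat \<Rightarrow> bool" where
  "link_has_boundary t gl v \<longleftrightarrow>
     (\<exists>j b f. (j, b) \<in> link_triangles t gl v \<and> f < 4 \<and> f \<noteq> b \<and> gl j f = None)"

(* A gluing of t tetrahedra is a triangulation of a compact 3-manifold
   (possibly with boundary) iff no edge is identified with itself in reverse
   and every vertex link (a connected surface) is a 2-sphere (closed, chi = 2)
   or a disc (with boundary, chi = 1). *)
definition is_3manifold_triangulation :: "nat \<Rightarrow> gluing \<Rightarrow> bool" where
  "is_3manifold_triangulation t gl \<longleftrightarrow> valid_gluing t gl \<and>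
     (\<forall>i<t. \<forall>a<4. \<forall>b<4. a \<noteq> b \<longrightarrow> \<not> edge_eq t gl (i, a, b) (i, b, a)) \<and>
     (\<forall>i<t. \<forall>a<4.
        (link_has_boundary t gl (i, a) \<longrightarrow> link_euler t gl (i, a) = 1) \<and>
        (\<not> link_has_boundary t gl (i, a) \<longrightarrow> link_euler t gl (i, a) = 2))"

(* A vector of R^(7t) is a function nat \<times> nat \<Rightarrow> real
   supported on {..<t} \<times> {..<7}.  Coordinate (i, k): k < 4 is the triangle
   type of tetrahedron i cutting off vertex k; k = 4,5,6 are the quad types
   separating {0,1}|{2,3}, {0,2}|{1,3}, {0,3}|{1,2}.
   --------------------------------------------------------------------- *)

(* index of the quad type separating {a,b} from the other two vertices *)
definition quad_type :: "nat \<Rightarrow> nat \<Rightarrow> nat" where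
  "quad_type a b = (if a = 0 then b + 3 else if b = 0 then a + 3 else 9 - a - b)"

definition coord_index :: "nat \<Rightarrow> (nat \<times> nat) set" where
  "coord_index t = {..<t} \<times> {..<7}"

(* The normal arc in face f (of tetrahedron i) around the corner c
   (joining the two sides of the face meeting at c) is met by the triangle
   type c and the quad type separating {c, f} from the rest. *)
definition matching :: "nat \<Rightarrow> gluing \<Rightarrow> (nat \<times> nat \<Rightarrow> real) \<Rightarrow> bool" where
  "matching t gl v \<longleftrightarrow>
     (\<forall>i<t. \<forall>f<4. \<forall>j s. gl i f = Some (j, s) \<longrightarrow>
        (\<forall>c<4. c \<noteq> f \<longrightarrow>
           v (i, c) + v (i, quad_type c f) = v (j, s c) + v (j, quad_type (s c) (s f))))"

definition haken_cone :: "nat \<Rightarrow> gluing \<Rightarrow> (nat \<times> nat \<Rightarrow> real) set" where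
  "haken_cone t gl = {v. (\<forall>x. x \<notin> coord_index t \<longrightarrow> v x = 0) \<and>
                          (\<forall>x\<in>coord_index t. 0 \<le> v x) \<and> matching t gl v}"

definition integral_vec :: "('a \<Rightarrow> real) \<Rightarrow> bool" where
  "integral_vec v \<longleftrightarrow> (\<forall>x. v x \<in> \<int>)"

definition extreme_ray_vec :: "('a \<Rightarrow> real) set \<Rightarrow> ('a \<Rightarrow> real) \<Rightarrow> bool" where
  "extreme_ray_vec C u \<longleftrightarrow> u \<in> C \<and> u \<noteq> (\<lambda>x. 0) \<and>
     (\<forall>a\<in>C. \<forall>b\<in>C. (\<lambda>x. a x + b x) = u \<longrightarrow> (\<exists>c\<ge>0. a = (\<lambda>x. c * u x)) \<and> (\<exists>c\<ge>0. b = (\<lambda>x. c * u x)))"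

definition min_vertex_solution :: "('a \<Rightarrow> real) set \<Rightarrow> ('a \<Rightarrow> real) \<Rightarrow> bool" where
  "min_vertex_solution C v \<longleftrightarrow> extreme_ray_vec C v \<and> integral_vec v \<and>
     (\<forall>c. 0 < c \<and> c < 1 \<longrightarrow> \<not> integral_vec (\<lambda>x. c * v x))"

definition min_hilbert_basis :: "('a \<Rightarrow> real) set \<Rightarrow> ('a \<Rightarrow> real) set" where
  "min_hilbert_basis C = {v. v \<in> C \<and> integral_vec v \<and> v \<noteq> (\<lambda>x. 0) \<and>
     \<not> (\<exists>a b. a \<in> C \<and> b \<in> C \<and> integral_vec a \<and> integral_vec b \<and>
               a \<noteq> (\<lambda>x. 0) \<and> b \<noteq> (\<lambda>x. 0) \<and> v = (\<lambda>x. a x + b x))}"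

end

theory Submission
  imports Defs "Jordan_Normal_Form.Determinant"
begin

(* (1) A minimal vertex solution v spans an extreme ray, and every cone vector supported inside
   supp v is a multiple of v.  Since v is the smallest integer point on its ray, v is determined
   by its support, so there are at most 2^(7t) of them.
   (2) The Haken cone is {v >= 0 : A v = 0} with integer rows of squared norm at most 4.  For a
   nonzero cone vector w of minimal support, the columns of A in supp w have a one-dimensional
   kernel, spanned by the vector of cofactors of a full-rank k x (k+1) submatrix; this is an
   integral multiple of w whose entries are k x k minors, hence at most 2^k in absolute value by
   Hadamard's inequality.  Subtracting the largest multiple of such a vector that keeps us in the
   cone kills a coordinate, so every cone vector is a nonnegative combination of at most 7t
   integral cone vectors with entries at most 2^(7t-1).  An irreducible integral vector with a
   coefficient >= 1 in this combination equals the corresponding generator; otherwise its entries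
   are at most 7t 2^(7t-1).  Counting integral vectors in that box gives the bound. *)

section \<open>Hadamard's inequality\<close>

definition dot :: "nat \<Rightarrow> (nat \<Rightarrow> real) \<Rightarrow> (nat \<Rightarrow> real) \<Rightarrow> real" where
  "dot n u v = (\<Sum>j<n. u j * v j)"

(* Projection onto a null vector is 0 because x / 0 = 0, so the process also runs through
   linearly dependent rows. *)
function gram_schmidt_row :: "nat \<Rightarrow> (nat \<Rightarrow> nat \<Rightarrow> real) \<Rightarrow> nat \<Rightarrow> nat \<Rightarrow> real" where
  "gram_schmidt_row n r k = (\<lambda>j. r k j -
     (\<Sum>l<k. dot n (r k) (gram_schmidt_row n r l) / dot n (gram_schmidt_row n r l) (gram_schmidt_row n r l)
             * gram_schmidt_row n r l j))"
  by auto
termination by (relation "measure (\<lambda>(n, r, k). k)") auto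

declare gram_schmidt_row.simps [simp del]

lemma dot_commute: "dot n u v = dot n v u"
  unfolding dot_def by (simp add: mult.commute)

lemma dot_self_nonneg: "0 \<le> dot n u u"
  unfolding dot_def by (auto intro: sum_nonneg)

lemma dot_self_eq_0_imp_dot_eq_0:
  assumes "dot n u u = 0" shows "dot n v u = 0"
proof -
  have "u j = 0" if "j < n" for j
    using assms that unfolding dot_def by (simp add: sum_nonneg_eq_0_iff)
  then show ?thesis unfolding dot_def by simp
qed

lemma dot_diff_sum_left:
  "dot n (\<lambda>j. a j - (\<Sum>l\<in>L. c l * b l j)) v = dot n a v - (\<Sum>l\<in>L. c l * dot n (b l) v)"
  unfolding dot_def
  by (simp add: algebra_simps sum_subtractf sum_distrib_left sum_distrib_right sum.swap[of _ L])

lemma dot_sum_right: "dot n u (\<lambda>j. \<Sum>l\<in>L. c l * b l j) = (\<Sum>l\<in>L. c l * dot n u (b l))"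
  unfolding dot_def by (simp add: sum_distrib_left sum.swap[of _ L] algebra_simps)

lemma gram_schmidt_row_orthogonal:
  "m < k \<Longrightarrow> dot n (gram_schmidt_row n r k) (gram_schmidt_row n r m) = 0"
proof (induction k arbitrary: m rule: less_induct)
  case (less k)
  let ?w = "gram_schmidt_row n r"
  have orth: "dot n (?w l) (?w m) = 0" if "l < k" "l \<noteq> m" for l
    using less.IH less.prems that dot_commute by (metis linorder_neqE_nat)
  have "(\<Sum>l<k. dot n (r k) (?w l) / dot n (?w l) (?w l) * dot n (?w l) (?w m))
      = dot n (r k) (?w m) / dot n (?w m) (?w m) * dot n (?w m) (?w m)"
    using less.prems orth by (subst sum.remove[of _ m]) (auto intro!: sum.neutral)
  moreover have "dot n (?w k) (?w m) = dot n (r k) (?w m)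
      - (\<Sum>l<k. dot n (r k) (?w l) / dot n (?w l) (?w l) * dot n (?w l) (?w m))"
    by (subst gram_schmidt_row.simps) (rule dot_diff_sum_left)
  ultimately show ?case
    using dot_self_eq_0_imp_dot_eq_0[of n "?w m" "r k"] by auto
qed

lemma dot_gram_schmidt_row_le: "dot n (gram_schmidt_row n r k) (gram_schmidt_row n r k) \<le> dot n (r k) (r k)"
proof -
  let ?w = "gram_schmidt_row n r"
  define p where "p = (\<lambda>j. \<Sum>l<k. dot n (r k) (?w l) / dot n (?w l) (?w l) * ?w l j)"
  have r_eq: "r k = (\<lambda>j. ?w k j + p j)"
    by (subst gram_schmidt_row.simps) (simp add: p_def)
  have "dot n (?w k) p = (\<Sum>l<k. dot n (r k) (?w l) / dot n (?w l) (?w l) * dot n (?w k) (?w l))"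
    unfolding p_def by (rule dot_sum_right)
  also have "\<dots> = 0" by (simp add: gram_schmidt_row_orthogonal)
  finally have "dot n (?w k) p = 0" .
  moreover have "dot n (r k) (r k) = dot n (?w k) (?w k) + 2 * dot n (?w k) p + dot n p p"
    by (subst r_eq)+ (simp add: dot_def algebra_simps sum.distrib sum_distrib_left)
  ultimately show ?thesis using dot_self_nonneg[of n p] by simp
qed

lemma prod_list_map_upt: "prod_list (map f [0..<n]) = (\<Prod>i<n. f i)"
  by (induction n) auto

lemma det_gram_schmidt_rows:
  "det (mat n n (\<lambda>(i, j). r i j)) = det (mat n n (\<lambda>(i, j). gram_schmidt_row n r i j))"
proof -
  let ?w = "gram_schmidt_row n r"
  define W where "W = mat n n (\<lambda>(i, j). ?w i j)"
  define L where "L = mat n n (\<lambda>(i, l). if l < i then dot n (r i) (?w l) / dot n (?w l) (?w l)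
                                         else if l = i then 1 else 0)"
  have W: "W \<in> carrier_mat n n" and L: "L \<in> carrier_mat n n" by (auto simp: W_def L_def)
  have "mat n n (\<lambda>(i, j). r i j) = L * W"
  proof (rule eq_matI)
    fix i j assume "i < dim_row (L * W)" "j < dim_col (L * W)"
    then have i: "i < n" and j: "j < n" using L W by auto
    have "(L * W) $$ (i, j) = (\<Sum>l<n. L $$ (i, l) * W $$ (l, j))"
      using i j L W by (simp add: scalar_prod_def lessThan_atLeast0)
    also have "\<dots> = (\<Sum>l\<in>{..<i} \<union> {i}. L $$ (i, l) * W $$ (l, j))"
      using i j by (intro sum.mono_neutral_right) (auto simp: L_def)
    also have "\<dots> = (\<Sum>l<i. dot n (r i) (?w l) / dot n (?w l) (?w l) * ?w l j) + ?w i j"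
      using i j by (simp add: L_def W_def)
    also have "\<dots> = r i j"
      by (subst (2) gram_schmidt_row.simps) simp
    finally show "mat n n (\<lambda>(i, j). r i j) $$ (i, j) = (L * W) $$ (i, j)" using i j by simp
  qed (use L W in auto)
  moreover have "det L = 1"
    using det_lower_triangular[OF _ L] L by (simp add: L_def diag_mat_def prod_list_map_upt)
  ultimately have "det (mat n n (\<lambda>(i, j). r i j)) = det W" using det_mult[OF L W] by simp
  then show ?thesis by (simp only: W_def)
qed

theorem hadamard_inequality:
  fixes A :: "real mat"
  assumes A: "A \<in> carrier_mat n n"
  shows "(det A)\<^sup>2 \<le> (\<Prod>i<n. \<Sum>j<n. (A $$ (i, j))\<^sup>2)"
proof -
  define r where "r = (\<lambda>i j. A $$ (i, j))"
  let ?w = "gram_schmidt_row n r"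
  define W where "W = mat n n (\<lambda>(i, j). ?w i j)"
  have W: "W \<in> carrier_mat n n" by (simp add: W_def)
  have "A = mat n n (\<lambda>(i, j). r i j)" by (rule eq_matI) (use A in \<open>auto simp: r_def\<close>)
  then have det_A: "det A = det W" using det_gram_schmidt_rows[of n r] by (simp add: W_def)
  define G where "G = W * transpose_mat W"
  have G: "G \<in> carrier_mat n n" using W by (simp add: G_def)
  have G_entry: "G $$ (i, k) = dot n (?w i) (?w k)" if "i < n" "k < n" for i k
    using that W by (simp add: G_def scalar_prod_def dot_def W_def lessThan_atLeast0)
  have "det G = det W * det W"
    unfolding G_def using det_mult[OF W transpose_carrier_mat[THEN iffD2, OF W]] det_transpose[OF W] by simp
  moreover have "upper_triangular G"
    using G by (intro upper_triangularI) (auto simp: G_entry gram_schmidt_row_orthogonal)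
  then have "det G = (\<Prod>i<n. dot n (?w i) (?w i))"
    using det_upper_triangular[OF _ G] G by (simp add: diag_mat_def prod_list_map_upt G_entry)
  ultimately have "(det A)\<^sup>2 = (\<Prod>i<n. dot n (?w i) (?w i))"
    using det_A by (simp add: power2_eq_square)
  also have "\<dots> \<le> (\<Prod>i<n. dot n (r i) (r i))"
    by (intro prod_mono conjI dot_self_nonneg dot_gram_schmidt_row_le)
  finally show ?thesis by (simp add: dot_def r_def power2_eq_square)
qed


section \<open>Integral null vectors from cofactors\<close>

definition rows_mat :: "('a \<Rightarrow> real) list \<Rightarrow> 'a list \<Rightarrow> real mat" where
  "rows_mat R cs = mat (length R) (length cs) (\<lambda>(i, l). (R ! i) (cs ! l))"

definition cofactor_vec :: "('a \<Rightarrow> real) list \<Rightarrow> 'a list \<Rightarrow> 'a \<Rightarrow> real" where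
  "cofactor_vec R cs x = (\<Sum>l<length cs. if cs ! l = x
     then (-1) ^ (length R + l) * det (rows_mat R (take l cs @ drop (Suc l) cs)) else 0)"

lemma rows_mat_carrier: "rows_mat R cs \<in> carrier_mat (length R) (length cs)"
  by (simp add: rows_mat_def)

lemma distinct_take_drop_Suc: "distinct cs \<Longrightarrow> distinct (take l cs @ drop (Suc l) cs)"
  by (simp add: set_take_disj_set_drop_if_distinct)

lemma sum_set_conv_nth: "distinct cs \<Longrightarrow> (\<Sum>x\<in>set cs. f x) = (\<Sum>l<length cs. f (cs ! l))"
  by (simp add: sum.distinct_set_conv_list sum_list_sum_nth atLeast0LessThan)

lemma cofactor_vec_nth:
  assumes "distinct cs" "l < length cs"
  shows "cofactor_vec R cs (cs ! l) = (-1) ^ (length R + l) * det (rows_mat R (take l cs @ drop (Suc l) cs))"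
  unfolding cofactor_vec_def using assms by (simp add: nth_eq_iff_index_eq if_distrib cong: if_cong)

lemma cofactor_vec_outside: "x \<notin> set cs \<Longrightarrow> cofactor_vec R cs x = 0"
  unfolding cofactor_vec_def by (intro sum.neutral) auto

lemma sum_mult_cofactor_vec:
  assumes "distinct cs" "length cs = Suc (length R)"
  shows "(\<Sum>x\<in>set cs. a x * cofactor_vec R cs x) = det (rows_mat (R @ [a]) cs)"
proof -
  let ?M = "rows_mat (R @ [a]) cs"
  have M: "?M \<in> carrier_mat (length cs) (length cs)"
    using rows_mat_carrier[of "R @ [a]" cs] assms(2) by simp
  have delete: "mat_delete ?M (length R) l = rows_mat R (take l cs @ drop (Suc l) cs)"
    if "l < length cs" for l
    by (rule eq_matI) (use assms that in \<open>auto simp: mat_delete_def rows_mat_def nth_append min_def\<close>)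
  have "det ?M = (\<Sum>l<length cs. ?M $$ (length R, l) * cofactor ?M (length R) l)"
    by (rule laplace_expansion_row[OF M]) (use assms in simp)
  also have "\<dots> = (\<Sum>l<length cs. a (cs ! l) * cofactor_vec R cs (cs ! l))"
  proof (intro sum.cong refl)
    fix l assume "l \<in> {..<length cs}"
    moreover have "?M $$ (length R, l) = a (cs ! l)" if "l < length cs"
      using assms that by (simp add: rows_mat_def)
    ultimately show "?M $$ (length R, l) * cofactor ?M (length R) l = a (cs ! l) * cofactor_vec R cs (cs ! l)"
      using assms by (simp add: cofactor_def delete cofactor_vec_nth)
  qed
  finally show ?thesis by (simp add: sum_set_conv_nth[OF assms(1)])
qed

lemma det_Ints: "\<forall>i<dim_row A. \<forall>j<dim_col A. A $$ (i, j) \<in> \<int> \<Longrightarrow> det (A :: real mat) \<in> \<int>"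
  unfolding det_def by (auto intro!: Ints_sum Ints_mult Ints_prod simp: sign_def)

lemma cofactor_vec_Ints: "\<forall>\<rho>\<in>set R. \<forall>x. \<rho> x \<in> \<int> \<Longrightarrow> cofactor_vec R cs x \<in> \<int>"
  unfolding cofactor_vec_def by (auto intro!: Ints_sum Ints_mult det_Ints simp: rows_mat_def)

lemma abs_det_rows_mat_le:
  assumes "distinct cs" "length cs = length R" "0 \<le> B"
    and norm: "\<forall>\<rho>\<in>set R. (\<Sum>x\<in>set cs. (\<rho> x)\<^sup>2) \<le> B\<^sup>2"
  shows "\<bar>det (rows_mat R cs)\<bar> \<le> B ^ length R"
proof -
  let ?k = "length R"
  have "(det (rows_mat R cs))\<^sup>2 \<le> (\<Prod>i<?k. \<Sum>j<?k. (rows_mat R cs $$ (i, j))\<^sup>2)"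
    by (rule hadamard_inequality) (use assms(2) in \<open>simp add: rows_mat_def\<close>)
  also have "\<dots> = (\<Prod>i<?k. \<Sum>x\<in>set cs. ((R ! i) x)\<^sup>2)"
    using assms(1,2) by (intro prod.cong refl) (simp add: sum_set_conv_nth rows_mat_def)
  also have "\<dots> \<le> (\<Prod>i<?k. B\<^sup>2)"
    using norm by (intro prod_mono) (auto intro: sum_nonneg)
  also have "\<dots> = (B ^ ?k)\<^sup>2" by (simp add: power_mult_distrib[symmetric] power_mult[symmetric] mult.commute)
  finally show ?thesis using assms(3) by (simp add: abs_le_square_iff[symmetric])
qed

lemma abs_cofactor_vec_le:
  assumes "distinct cs" "length cs = Suc (length R)" "0 \<le> B"
    and norm: "\<forall>\<rho>\<in>set R. (\<Sum>x\<in>set cs. (\<rho> x)\<^sup>2) \<le> B\<^sup>2"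
  shows "\<bar>cofactor_vec R cs x\<bar> \<le> B ^ length R"
proof (cases "x \<in> set cs")
  case True
  then obtain l where l: "l < length cs" "x = cs ! l" by (metis in_set_conv_nth)
  let ?cs' = "take l cs @ drop (Suc l) cs"
  have sub: "set ?cs' \<subseteq> set cs" using set_take_subset set_drop_subset by fastforce
  have "(\<Sum>x\<in>set ?cs'. (\<rho> x)\<^sup>2) \<le> B\<^sup>2" if "\<rho> \<in> set R" for \<rho>
  proof -
    have "(\<Sum>x\<in>set ?cs'. (\<rho> x)\<^sup>2) \<le> (\<Sum>x\<in>set cs. (\<rho> x)\<^sup>2)"
      by (rule sum_mono2[OF finite_set sub]) simp
    then show ?thesis using norm that by fastforce
  qed
  then have "\<bar>det (rows_mat R ?cs')\<bar> \<le> B ^ length R"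
    using assms l by (intro abs_det_rows_mat_le distinct_take_drop_Suc) auto
  then show ?thesis using l assms(1) by (simp add: cofactor_vec_nth abs_mult)
qed (use assms(3) in \<open>simp add: cofactor_vec_outside\<close>)

lemma det_rows_mat_eq_0:
  assumes "distinct cs" "length cs = length R"
    and "\<forall>\<rho>\<in>set R. (\<Sum>x\<in>set cs. \<rho> x * w x) = 0" and "\<exists>x\<in>set cs. w x \<noteq> 0"
  shows "det (rows_mat R cs) = 0"
proof -
  let ?n = "length cs"
  have M: "rows_mat R cs \<in> carrier_mat ?n ?n" using rows_mat_carrier assms(2) by metis
  define v where "v = vec ?n (\<lambda>l. w (cs ! l))"
  have v: "v \<in> carrier_vec ?n" by (simp add: v_def)
  obtain l where "l < ?n" "w (cs ! l) \<noteq> 0" using assms(4) by (auto simp: in_set_conv_nth)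
  then have "v $ l \<noteq> 0\<^sub>v ?n $ l" by (simp add: v_def)
  then have "v \<noteq> 0\<^sub>v ?n" by metis
  moreover have "rows_mat R cs *\<^sub>v v = 0\<^sub>v ?n"
  proof (rule eq_vecI)
    fix i assume "i < dim_vec (0\<^sub>v ?n :: real vec)"
    then have i: "i < length R" using assms(2) by simp
    have "(rows_mat R cs *\<^sub>v v) $ i = (\<Sum>x\<in>set cs. (R ! i) x * w x)"
      using i M by (simp add: rows_mat_def v_def scalar_prod_def sum_set_conv_nth[OF assms(1)] lessThan_atLeast0)
    also have "\<dots> = 0" using assms(3) i by simp
    finally show "(rows_mat R cs *\<^sub>v v) $ i = 0\<^sub>v ?n $ i" using i assms(2) by simp
  qed (use M in simp)
  ultimately show ?thesis using det_0_iff_vec_prod_zero[OF M] v by blast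
qed

lemma exists_null_vector_if_minors_vanish:
  assumes "distinct cs"
    and "\<forall>R. set R \<subseteq> Rows \<longrightarrow> length R = length cs \<longrightarrow> det (rows_mat R cs) = 0"
  shows "\<exists>y. y \<noteq> (\<lambda>x. 0) \<and> (\<forall>x. x \<notin> set cs \<longrightarrow> y x = 0) \<and>
             (\<forall>\<rho>\<in>Rows. (\<Sum>x\<in>set cs. \<rho> x * y x) = 0)"
  using assms
proof (induction cs)
  case Nil
  have "det (rows_mat [] ([] :: 'a list)) = 0" using Nil.prems(2) by simp
  moreover have "det (rows_mat [] ([] :: 'a list)) = 1" by (simp add: rows_mat_def)
  ultimately show ?case by simp
next
  case (Cons p cs)
  show ?case
  proof (cases "\<forall>R. set R \<subseteq> Rows \<longrightarrow> length R = length cs \<longrightarrow> det (rows_mat R cs) = 0")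
    case True
    then obtain y where "y \<noteq> (\<lambda>x. 0)" "\<forall>x. x \<notin> set cs \<longrightarrow> y x = 0"
      "\<forall>\<rho>\<in>Rows. (\<Sum>x\<in>set cs. \<rho> x * y x) = 0"
      using Cons by auto
    moreover have "y p = 0" using calculation(2) Cons.prems(1) by simp
    ultimately show ?thesis using Cons.prems(1) by (intro exI[of _ y]) auto
  next
    case False
    then obtain R where R: "set R \<subseteq> Rows" "length R = length cs" "det (rows_mat R cs) \<noteq> 0" by auto
    let ?y = "cofactor_vec R (p # cs)"
    have "?y p \<noteq> 0" using cofactor_vec_nth[OF Cons.prems(1), of 0 R] R(3) by simp
    moreover have "(\<Sum>x\<in>set (p # cs). \<rho> x * ?y x) = 0" if "\<rho> \<in> Rows" for \<rho>
      using sum_mult_cofactor_vec[OF Cons.prems(1), of R \<rho>] Cons.prems(2) R that by simp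
    ultimately show ?thesis by (intro exI[of _ ?y]) (auto simp: cofactor_vec_outside)
  qed
qed

lemma exists_nonzero_minor:
  assumes dist: "distinct (p # cs)" and p: "w p \<noteq> 0"
    and null_multiple: "\<And>y. \<forall>x. x \<notin> set (p # cs) \<longrightarrow> y x = 0 \<Longrightarrow>
                              \<forall>\<rho>\<in>Rows. (\<Sum>x\<in>set (p # cs). \<rho> x * y x) = 0 \<Longrightarrow> \<exists>c. y = (\<lambda>x. c * w x)"
  shows "\<exists>R. set R \<subseteq> Rows \<and> length R = length cs \<and> det (rows_mat R cs) \<noteq> 0"
proof (rule ccontr)
  assume "\<not> ?thesis"
  then obtain y where y: "y \<noteq> (\<lambda>x. 0)" "\<forall>x. x \<notin> set cs \<longrightarrow> y x = 0"
    "\<forall>\<rho>\<in>Rows. (\<Sum>x\<in>set cs. \<rho> x * y x) = 0"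
    using exists_null_vector_if_minors_vanish[of cs Rows] dist by auto
  have "y p = 0" using y(2) dist by simp
  then have "\<forall>\<rho>\<in>Rows. (\<Sum>x\<in>set (p # cs). \<rho> x * y x) = 0" using y(3) dist by simp
  moreover have "\<forall>x. x \<notin> set (p # cs) \<longrightarrow> y x = 0" using y(2) by simp
  ultimately obtain c where "y = (\<lambda>x. c * w x)" using null_multiple by blast
  then show False using \<open>y p = 0\<close> p y(1) by auto
qed

lemma bounded_integral_multiple:
  assumes S: "finite S" "card S = Suc k"
    and w: "w \<noteq> (\<lambda>x. 0)" "\<forall>x. x \<notin> S \<longrightarrow> w x = 0" "\<forall>\<rho>\<in>Rows. (\<Sum>x\<in>S. \<rho> x * w x) = 0"
    and null_multiple: "\<And>y. \<forall>x. x \<notin> S \<longrightarrow> y x = 0 \<Longrightarrow> \<forall>\<rho>\<in>Rows. (\<Sum>x\<in>S. \<rho> x * y x) = 0 \<Longrightarrow>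
                              \<exists>c. y = (\<lambda>x. c * w x)"
    and Rows_Ints: "\<forall>\<rho>\<in>Rows. \<forall>x. \<rho> x \<in> \<int>"
    and Rows_norm: "\<forall>\<rho>\<in>Rows. (\<Sum>x\<in>S. (\<rho> x)\<^sup>2) \<le> B\<^sup>2" and "0 \<le> B"
  shows "\<exists>c. c \<noteq> 0 \<and> integral_vec (\<lambda>x. c * w x) \<and> (\<forall>x. \<bar>c * w x\<bar> \<le> B ^ k)"
proof -
  obtain p where p: "w p \<noteq> 0" using w(1) by auto
  then have "p \<in> S" using w(2) by blast
  obtain cs where cs: "set cs = S - {p}" "distinct cs"
    using finite_distinct_list[of "S - {p}"] S(1) by blast
  have dist: "distinct (p # cs)" and set_cs: "set (p # cs) = S" using cs \<open>p \<in> S\<close> by auto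
  have len: "length cs = k" using distinct_card[OF cs(2)] cs(1) S \<open>p \<in> S\<close> by simp
  have "\<exists>R. set R \<subseteq> Rows \<and> length R = length cs \<and> det (rows_mat R cs) \<noteq> 0"
    using exists_nonzero_minor[of p cs w Rows] dist p null_multiple unfolding set_cs by blast
  then obtain R where R: "set R \<subseteq> Rows" "length R = k" "det (rows_mat R cs) \<noteq> 0" using len by blast
  let ?y = "cofactor_vec R (p # cs)"
  (* Appending any row to R gives a singular matrix, as w is in its kernel; expanding its
     determinant along that row shows that the cofactor vector is a null vector. *)
  have "\<forall>\<rho>\<in>Rows. (\<Sum>x\<in>S. \<rho> x * ?y x) = 0"
  proof
    fix \<rho> assume "\<rho> \<in> Rows"
    have "(\<Sum>x\<in>S. \<rho> x * ?y x) = det (rows_mat (R @ [\<rho>]) (p # cs))"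
      using sum_mult_cofactor_vec[OF dist] R(2) len set_cs by simp
    also have "\<dots> = 0"
      using dist R len set_cs p w(3) \<open>\<rho> \<in> Rows\<close> \<open>p \<in> S\<close> by (intro det_rows_mat_eq_0) auto
    finally show "(\<Sum>x\<in>S. \<rho> x * ?y x) = 0" .
  qed
  moreover have "\<forall>x. x \<notin> S \<longrightarrow> ?y x = 0" using set_cs cofactor_vec_outside[of _ "p # cs" R] by blast
  ultimately obtain c where c: "\<And>x. ?y x = c * w x" using null_multiple by meson
  have "?y p \<noteq> 0" using cofactor_vec_nth[OF dist, of 0 R] R(3) by simp
  then have "c \<noteq> 0" using c by auto
  moreover have "integral_vec (\<lambda>x. c * w x)"
    unfolding integral_vec_def c[symmetric] using R(1) Rows_Ints by (intro allI cofactor_vec_Ints) auto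
  moreover have "\<bar>c * w x\<bar> \<le> B ^ k" for x
    using abs_cofactor_vec_le[OF dist _ \<open>0 \<le> B\<close>, of R x] c R len set_cs Rows_norm by auto
  ultimately show ?thesis by blast
qed


section \<open>Cones cut out by linear equations\<close>

definition supp :: "('a \<Rightarrow> real) \<Rightarrow> 'a set" where
  "supp v = {x. v x \<noteq> 0}"

definition in_null_space :: "'a set \<Rightarrow> ('a \<Rightarrow> real) set \<Rightarrow> ('a \<Rightarrow> real) \<Rightarrow> bool" where
  "in_null_space I Rows v \<longleftrightarrow> (\<forall>\<rho>\<in>Rows. (\<Sum>x\<in>I. \<rho> x * v x) = 0)"

definition kernel_cone :: "'a set \<Rightarrow> ('a \<Rightarrow> real) set \<Rightarrow> ('a \<Rightarrow> real) set" where
  "kernel_cone I Rows = {v. supp v \<subseteq> I \<and> (\<forall>x. 0 \<le> v x) \<and> in_null_space I Rows v}"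

lemma mem_supp_iff [simp]: "x \<in> supp v \<longleftrightarrow> v x \<noteq> 0"
  by (simp add: supp_def)

lemma supp_eq_empty_iff: "supp v = {} \<longleftrightarrow> v = (\<lambda>x. 0)"
  by (auto simp: supp_def fun_eq_iff)

lemma in_null_space_linear:
  "in_null_space I Rows v \<Longrightarrow> in_null_space I Rows w \<Longrightarrow> in_null_space I Rows (\<lambda>x. a * v x + b * w x)"
  unfolding in_null_space_def
  by (simp add: distrib_left sum.distrib mult.left_commute flip: sum_distrib_left)

lemma in_null_space_iff_subset:
  assumes "finite I" "S \<subseteq> I" "supp v \<subseteq> S"
  shows "in_null_space I Rows v \<longleftrightarrow> in_null_space S Rows v"
proof -
  have "(\<Sum>x\<in>I. \<rho> x * v x) = (\<Sum>x\<in>S. \<rho> x * v x)" for \<rho>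
    using assms by (intro sum.mono_neutral_right) (auto simp: supp_def)
  then show ?thesis by (simp add: in_null_space_def)
qed

lemma kernel_coneI:
  "supp v \<subseteq> I \<Longrightarrow> (\<And>x. 0 \<le> v x) \<Longrightarrow> in_null_space I Rows v \<Longrightarrow> v \<in> kernel_cone I Rows"
  by (simp add: kernel_cone_def)

lemma kernel_coneD:
  assumes "v \<in> kernel_cone I Rows"
  shows "supp v \<subseteq> I" "0 \<le> v x" "in_null_space I Rows v"
  using assms by (auto simp: kernel_cone_def)

lemma kernel_cone_add:
  assumes "v \<in> kernel_cone I Rows" "w \<in> kernel_cone I Rows"
  shows "(\<lambda>x. v x + w x) \<in> kernel_cone I Rows"
proof (rule kernel_coneI)
  show "supp (\<lambda>x. v x + w x) \<subseteq> I"
  proof -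
    have "supp (\<lambda>x. v x + w x) \<subseteq> supp v \<union> supp w" by (auto simp: supp_def)
    then show ?thesis using kernel_coneD(1)[OF assms(1)] kernel_coneD(1)[OF assms(2)] by blast
  qed
  show "0 \<le> v x + w x" for x
    using kernel_coneD(2)[OF assms(1)] kernel_coneD(2)[OF assms(2)] by (simp add: add_nonneg_nonneg)
  show "in_null_space I Rows (\<lambda>x. v x + w x)"
    using in_null_space_linear[OF kernel_coneD(3)[OF assms(1)] kernel_coneD(3)[OF assms(2)], of 1 1] by simp
qed

lemma kernel_cone_scale:
  assumes "v \<in> kernel_cone I Rows" "0 \<le> c"
  shows "(\<lambda>x. c * v x) \<in> kernel_cone I Rows"
proof (rule kernel_coneI)
  show "supp (\<lambda>x. c * v x) \<subseteq> I" using kernel_coneD(1)[OF assms(1)] by (auto simp: supp_def)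
  show "0 \<le> c * v x" for x using kernel_coneD(2)[OF assms(1)] assms(2) by simp
  show "in_null_space I Rows (\<lambda>x. c * v x)"
    using in_null_space_linear[OF kernel_coneD(3)[OF assms(1)] kernel_coneD(3)[OF assms(1)], of c 0] by simp
qed

lemma kernel_cone_sum_list:
  "\<forall>(g, c)\<in>set gs. g \<in> kernel_cone I Rows \<and> 0 \<le> c \<Longrightarrow>
   (\<lambda>x. \<Sum>(g, c)\<leftarrow>gs. c * g x) \<in> kernel_cone I Rows"
proof (induction gs)
  case Nil
  show ?case by (intro kernel_coneI) (auto simp: supp_def in_null_space_def)
next
  case (Cons gc gs)
  obtain g c where gc: "gc = (g, c)" by fastforce
  have "(\<lambda>x. c * g x) \<in> kernel_cone I Rows" using Cons.prems unfolding gc by (intro kernel_cone_scale) auto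
  moreover have "(\<lambda>x. \<Sum>(g, c)\<leftarrow>gs. c * g x) \<in> kernel_cone I Rows" using Cons.IH Cons.prems by simp
  ultimately have "(\<lambda>x. c * g x + (\<Sum>(g, c)\<leftarrow>gs. c * g x)) \<in> kernel_cone I Rows" by (rule kernel_cone_add)
  then show ?case unfolding gc by simp
qed

lemma finite_supp_kernel_cone:
  assumes "finite I" "v \<in> kernel_cone I Rows"
  shows "finite (supp v)"
  using finite_subset[OF kernel_coneD(1)[OF assms(2)] assms(1)] .

lemma kernel_cone_diff_multiple:
  assumes I: "finite I" and v: "v \<in> kernel_cone I Rows"
    and y: "supp y \<subseteq> supp v" "in_null_space I Rows y" and pos: "0 < y x1"
  shows "\<exists>\<mu>>0. (\<lambda>x. v x - \<mu> * y x) \<in> kernel_cone I Rows \<and> (\<exists>x0\<in>supp v. v x0 - \<mu> * y x0 = 0)"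
proof -
  define J where "J = {x \<in> supp v. 0 < y x}"
  have "x1 \<in> J" using subsetD[OF y(1), of x1] pos by (simp add: J_def)
  moreover have "finite J" using finite_supp_kernel_cone[OF I v] by (rule rev_finite_subset) (auto simp: J_def)
  ultimately have J: "finite J" "J \<noteq> {}" by auto
  define x0 where "x0 = arg_min_on (\<lambda>x. v x / y x) J"
  define \<mu> where "\<mu> = v x0 / y x0"
  have "x0 \<in> J" using arg_min_if_finite(1)[OF J] by (simp add: x0_def)
  then have x0: "x0 \<in> supp v" "0 < y x0" by (simp_all add: J_def)
  then have "0 < v x0" using kernel_coneD(2)[OF v, of x0] by (simp add: supp_def)
  then have "0 < \<mu>" using x0(2) by (simp add: \<mu>_def)
  have "\<mu> * y x \<le> v x" for x
  proof (cases "x \<in> J")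
    case True
    then have "\<mu> \<le> v x / y x" "0 < y x"
      using arg_min_least[OF J True, of "\<lambda>x. v x / y x"] by (simp_all add: J_def \<mu>_def x0_def)
    then show ?thesis by (simp add: pos_le_divide_eq)
  next
    case False
    then have "y x \<le> 0" using subsetD[OF y(1), of x] unfolding J_def by force
    then have "\<mu> * y x \<le> 0" using \<open>0 < \<mu>\<close> by (simp add: mult_nonneg_nonpos)
    then show ?thesis using kernel_coneD(2)[OF v, of x] by linarith
  qed
  moreover have "supp (\<lambda>x. v x - \<mu> * y x) \<subseteq> I"
  proof -
    have "supp (\<lambda>x. v x - \<mu> * y x) \<subseteq> supp v \<union> supp y" by (auto simp: supp_def)
    then show ?thesis using y(1) kernel_coneD(1)[OF v] by blast
  qed
  moreover have "in_null_space I Rows (\<lambda>x. v x - \<mu> * y x)"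
    using in_null_space_linear[OF kernel_coneD(3)[OF v] y(2), of 1 "- \<mu>"] by simp
  ultimately have "(\<lambda>x. v x - \<mu> * y x) \<in> kernel_cone I Rows"
    by (intro kernel_coneI) simp_all
  moreover have "v x0 - \<mu> * y x0 = 0" using x0(2) by (simp add: \<mu>_def)
  ultimately show ?thesis using \<open>0 < \<mu>\<close> x0(1) by blast
qed

lemma extreme_ray_vec_kernel_cone_supp:
  assumes I: "finite I" and ext: "extreme_ray_vec (kernel_cone I Rows) v"
    and w: "w \<in> kernel_cone I Rows" "supp w \<subseteq> supp v"
  shows "\<exists>c\<ge>0. w = (\<lambda>x. c * v x)"
proof (cases "w = (\<lambda>x. 0)")
  case True
  then show ?thesis by (intro exI[of _ 0]) simp
next
  case False
  then obtain x1 where "w x1 \<noteq> 0" by auto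
  then have "0 < w x1" using kernel_coneD(2)[OF w(1), of x1] by simp
  have v: "v \<in> kernel_cone I Rows" using ext by (simp add: extreme_ray_vec_def)
  obtain \<mu> where \<mu>: "0 < \<mu>" "(\<lambda>x. v x - \<mu> * w x) \<in> kernel_cone I Rows"
    using kernel_cone_diff_multiple[OF I v w(2) kernel_coneD(3)[OF w(1)] \<open>0 < w x1\<close>] by blast
  have split: "\<exists>c\<ge>0. b = (\<lambda>x. c * v x)"
    if "a \<in> kernel_cone I Rows" "b \<in> kernel_cone I Rows" "(\<lambda>x. a x + b x) = v" for a b
    using ext that unfolding extreme_ray_vec_def by blast
  have "(\<lambda>x. (v x - \<mu> * w x) + \<mu> * w x) = v" by simp
  then obtain c where "0 \<le> c" "(\<lambda>x. \<mu> * w x) = (\<lambda>x. c * v x)"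
    using split[OF \<mu>(2) kernel_cone_scale[OF w(1) less_imp_le[OF \<mu>(1)]]] by blast
  then have "w = (\<lambda>x. (c / \<mu>) * v x)" using \<mu>(1) by (auto simp: fun_eq_iff field_simps)
  then show ?thesis using \<open>0 \<le> c\<close> \<mu>(1) by (intro exI[of _ "c / \<mu>"]) simp
qed

lemma min_vertex_solution_supp_inj:
  assumes I: "finite I"
  shows "inj_on supp {v. min_vertex_solution (kernel_cone I Rows) v}"
proof (rule inj_onI, simp only: mem_Collect_eq)
  fix u v
  assume u: "min_vertex_solution (kernel_cone I Rows) u" and v: "min_vertex_solution (kernel_cone I Rows) v"
    and supp_eq: "supp u = supp v"
  have "extreme_ray_vec (kernel_cone I Rows) u" and "v \<in> kernel_cone I Rows" "v \<noteq> (\<lambda>x. 0)"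
    using u v by (auto simp: min_vertex_solution_def extreme_ray_vec_def)
  then obtain c where c: "0 \<le> c" "v = (\<lambda>x. c * u x)"
    using extreme_ray_vec_kernel_cone_supp[OF I] supp_eq by blast
  with \<open>v \<noteq> (\<lambda>x. 0)\<close> have "c \<noteq> 0" by auto
  have "\<not> c < 1"
    using u v c \<open>c \<noteq> 0\<close> by (auto simp: min_vertex_solution_def)
  moreover have "\<not> 1 < c"
  proof
    assume "1 < c"
    then have "(\<lambda>x. (1 / c) * v x) = u" using c by auto
    then have "integral_vec (\<lambda>x. (1 / c) * v x)" using u by (simp add: min_vertex_solution_def)
    moreover have "0 < 1 / c" "1 / c < 1" using \<open>1 < c\<close> by auto
    ultimately show False using v unfolding min_vertex_solution_def by blast
  qed
  ultimately show "u = v" using c by simp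
qed

theorem card_min_vertex_solutions_le:
  assumes I: "finite I"
  shows "finite {v. min_vertex_solution (kernel_cone I Rows) v} \<and>
         card {v. min_vertex_solution (kernel_cone I Rows) v} \<le> 2 ^ card I"
proof -
  let ?M = "{v. min_vertex_solution (kernel_cone I Rows) v}"
  have inj: "inj_on supp ?M" by (rule min_vertex_solution_supp_inj[OF I])
  have sub: "supp ` ?M \<subseteq> Pow I"
    by (auto simp: min_vertex_solution_def extreme_ray_vec_def dest: kernel_coneD(1))
  show ?thesis
    using inj_on_finite[OF inj sub] card_inj_on_le[OF inj sub] I by (simp add: card_Pow)
qed

definition support_minimal :: "('a \<Rightarrow> real) set \<Rightarrow> ('a \<Rightarrow> real) \<Rightarrow> bool" where
  "support_minimal C w \<longleftrightarrow> w \<in> C \<and> w \<noteq> (\<lambda>x. 0) \<and>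
     (\<forall>z\<in>C. z \<noteq> (\<lambda>x. 0) \<longrightarrow> supp z \<subseteq> supp w \<longrightarrow> supp z = supp w)"

lemma exists_support_minimal_le:
  assumes I: "finite I" and v: "v \<in> kernel_cone I Rows" "v \<noteq> (\<lambda>x. 0)"
  shows "\<exists>w. support_minimal (kernel_cone I Rows) w \<and> supp w \<subseteq> supp v"
proof -
  let ?P = "\<lambda>z. z \<in> kernel_cone I Rows \<and> z \<noteq> (\<lambda>x. 0) \<and> supp z \<subseteq> supp v"
  obtain w where w: "?P w" and least: "\<And>z. ?P z \<Longrightarrow> card (supp w) \<le> card (supp z)"
    using ex_has_least_nat[of ?P v "\<lambda>z. card (supp z)"] v by blast
  have "supp z = supp w"
    if "z \<in> kernel_cone I Rows" "z \<noteq> (\<lambda>x. 0)" "supp z \<subseteq> supp w" for z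
    using card_seteq[OF finite_supp_kernel_cone[OF I] that(3)] least[of z] w that by blast
  then show ?thesis using w by (auto simp: support_minimal_def)
qed

lemma support_minimal_null_vector_multiple:
  assumes I: "finite I" and w: "support_minimal (kernel_cone I Rows) w"
    and y: "supp y \<subseteq> supp w" "in_null_space I Rows y"
  shows "\<exists>c. y = (\<lambda>x. c * w x)"
proof -
  have w_cone: "w \<in> kernel_cone I Rows" using w by (simp add: support_minimal_def)
  have pos_case: "\<exists>c. y = (\<lambda>x. c * w x)"
    if y: "supp y \<subseteq> supp w" "in_null_space I Rows y" "0 < y x1" for y x1
  proof -
    obtain \<mu> x0 where \<mu>: "0 < \<mu>" "(\<lambda>x. w x - \<mu> * y x) \<in> kernel_cone I Rows"
      and x0: "x0 \<in> supp w" "w x0 - \<mu> * y x0 = 0"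
      using kernel_cone_diff_multiple[OF I w_cone y] by blast
    have "supp (\<lambda>x. w x - \<mu> * y x) \<subseteq> supp w" using subsetD[OF y(1)] by force
    moreover have "x0 \<notin> supp (\<lambda>x. w x - \<mu> * y x)" using x0(2) by simp
    ultimately have "(\<lambda>x. w x - \<mu> * y x) = (\<lambda>x. 0)"
      using w \<mu>(2) x0(1) unfolding support_minimal_def by blast
    then have "y = (\<lambda>x. (1 / \<mu>) * w x)" using \<mu>(1) by (auto simp: fun_eq_iff field_simps)
    then show ?thesis by blast
  qed
  consider (pos) x1 where "0 < y x1" | (neg) x1 where "y x1 < 0" | (zero) "y = (\<lambda>x. 0)"
    by (metis linorder_neqE_linordered_idom)
  then show ?thesis
  proof cases
    case pos
    then show ?thesis using pos_case y by blast
  next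
    case neg
    have "supp (\<lambda>x. - y x) \<subseteq> supp w" using y(1) by auto
    moreover have "in_null_space I Rows (\<lambda>x. - y x)"
      using in_null_space_linear[OF y(2) y(2), of "-1" 0] by simp
    ultimately obtain c where "(\<lambda>x. - y x) = (\<lambda>x. c * w x)" using pos_case neg by fastforce
    then have "y = (\<lambda>x. (- c) * w x)" by (simp add: fun_eq_iff) (metis minus_equation_iff)
    then show ?thesis by blast
  next
    case zero
    then show ?thesis by (intro exI[of _ 0]) simp
  qed
qed

definition integral_rows_norm_le :: "nat \<Rightarrow> ('a \<Rightarrow> real) set \<Rightarrow> bool" where
  "integral_rows_norm_le B Rows \<longleftrightarrow>
     (\<forall>\<rho>\<in>Rows. (\<forall>x. \<rho> x \<in> \<int>) \<and> (\<forall>X. finite X \<longrightarrow> (\<Sum>x\<in>X. (\<rho> x)\<^sup>2) \<le> (real B)\<^sup>2))"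

lemma support_minimal_integral_multiple:
  assumes I: "finite I" and rows: "integral_rows_norm_le B Rows"
    and w: "support_minimal (kernel_cone I Rows) w"
  shows "\<exists>c>0. integral_vec (\<lambda>x. c * w x) \<and> (\<forall>x. c * w x \<le> real B ^ (card (supp w) - 1))"
proof -
  let ?S = "supp w"
  have w_cone: "w \<in> kernel_cone I Rows" and "w \<noteq> (\<lambda>x. 0)" using w by (auto simp: support_minimal_def)
  have S: "finite ?S" "?S \<subseteq> I" using finite_supp_kernel_cone[OF I w_cone] kernel_coneD(1)[OF w_cone] by auto
  moreover have "?S \<noteq> {}" using \<open>w \<noteq> (\<lambda>x. 0)\<close> by (simp add: supp_eq_empty_iff)
  ultimately obtain k where k: "card ?S = Suc k" by (metis card_gt_0_iff gr0_implies_Suc)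
  have null_S: "in_null_space I Rows y \<longleftrightarrow> in_null_space ?S Rows y" if "supp y \<subseteq> ?S" for y
    using in_null_space_iff_subset[OF I S(2) that] .
  have "\<exists>c. c \<noteq> 0 \<and> integral_vec (\<lambda>x. c * w x) \<and> (\<forall>x. \<bar>c * w x\<bar> \<le> real B ^ k)"
  proof (rule bounded_integral_multiple[OF S(1) k \<open>w \<noteq> (\<lambda>x. 0)\<close>])
    show "\<forall>x. x \<notin> ?S \<longrightarrow> w x = 0" by simp
    show "\<forall>\<rho>\<in>Rows. (\<Sum>x\<in>?S. \<rho> x * w x) = 0"
      using null_S[of w] kernel_coneD(3)[OF w_cone] by (simp add: in_null_space_def)
    show "\<exists>c. y = (\<lambda>x. c * w x)"
      if "\<forall>x. x \<notin> ?S \<longrightarrow> y x = 0" "\<forall>\<rho>\<in>Rows. (\<Sum>x\<in>?S. \<rho> x * y x) = 0" for y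
    proof -
      have "supp y \<subseteq> ?S" using that(1) by auto
      then show ?thesis
        using support_minimal_null_vector_multiple[OF I w] null_S that(2) by (simp add: in_null_space_def)
    qed
    show "\<forall>\<rho>\<in>Rows. \<forall>x. \<rho> x \<in> \<int>" "\<forall>\<rho>\<in>Rows. (\<Sum>x\<in>?S. (\<rho> x)\<^sup>2) \<le> (real B)\<^sup>2"
      using rows S(1) by (auto simp: integral_rows_norm_le_def)
  qed simp
  then obtain c where c: "c \<noteq> 0" "integral_vec (\<lambda>x. c * w x)" "\<And>x. \<bar>c * w x\<bar> \<le> real B ^ k"
    by blast
  have abs_eq: "\<bar>c\<bar> * w x = \<bar>c * w x\<bar>" for x
    using kernel_coneD(2)[OF w_cone, of x] by (simp add: abs_mult)
  show ?thesis
  proof (intro exI[of _ "\<bar>c\<bar>"] conjI allI)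
    show "0 < \<bar>c\<bar>" using c(1) by simp
    show "integral_vec (\<lambda>x. \<bar>c\<bar> * w x)"
      using c(2) by (simp add: integral_vec_def abs_eq Ints_abs)
    show "\<bar>c\<bar> * w x \<le> real B ^ (card ?S - 1)" for x
      using c(3)[of x] k by (simp add: abs_eq)
  qed
qed

definition bounded_lattice_points :: "('a \<Rightarrow> real) set \<Rightarrow> real \<Rightarrow> ('a \<Rightarrow> real) set" where
  "bounded_lattice_points C b = {g \<in> C. integral_vec g \<and> g \<noteq> (\<lambda>x. 0) \<and> (\<forall>x. g x \<le> b)}"

lemma exists_bounded_lattice_point_le:
  assumes I: "finite I" and rows: "integral_rows_norm_le B Rows" "0 < B"
    and v: "v \<in> kernel_cone I Rows" "v \<noteq> (\<lambda>x. 0)"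
  shows "\<exists>g\<in>bounded_lattice_points (kernel_cone I Rows) (real B ^ (card I - 1)). supp g \<subseteq> supp v"
proof -
  obtain w where w: "support_minimal (kernel_cone I Rows) w" "supp w \<subseteq> supp v"
    using exists_support_minimal_le[OF I v] by blast
  obtain c where c: "0 < c" "integral_vec (\<lambda>x. c * w x)" "\<And>x. c * w x \<le> real B ^ (card (supp w) - 1)"
    using support_minimal_integral_multiple[OF I rows(1) w(1)] by blast
  have w_cone: "w \<in> kernel_cone I Rows" "w \<noteq> (\<lambda>x. 0)" using w(1) by (auto simp: support_minimal_def)
  have "card (supp w) \<le> card I" using card_mono[OF I kernel_coneD(1)[OF w_cone(1)]] .
  then have "real B ^ (card (supp w) - 1) \<le> real B ^ (card I - 1)"
    using rows(2) by (intro power_increasing) auto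
  then have "(\<lambda>x. c * w x) \<in> bounded_lattice_points (kernel_cone I Rows) (real B ^ (card I - 1))"
    using c w_cone kernel_cone_scale[OF w_cone(1)] order.trans[OF c(3)]
    by (auto simp: bounded_lattice_points_def fun_eq_iff)
  moreover have "supp (\<lambda>x. c * w x) \<subseteq> supp v" using c(1) w(2) by auto
  ultimately show ?thesis by blast
qed

lemma kernel_cone_decomposition:
  assumes I: "finite I" and rows: "integral_rows_norm_le B Rows" "0 < B"
    and v: "v \<in> kernel_cone I Rows"
  shows "\<exists>gs. length gs \<le> card (supp v) \<and>
     (\<forall>(g, c)\<in>set gs. g \<in> bounded_lattice_points (kernel_cone I Rows) (real B ^ (card I - 1)) \<and> 0 \<le> c) \<and>
     v = (\<lambda>x. \<Sum>(g, c)\<leftarrow>gs. c * g x)"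
  using v
proof (induction "card (supp v)" arbitrary: v rule: less_induct)
  case less
  let ?C = "kernel_cone I Rows" and ?b = "real B ^ (card I - 1)"
  show ?case
  proof (cases "v = (\<lambda>x. 0)")
    case True
    then show ?thesis by (intro exI[of _ "[]"]) simp
  next
    case False
    obtain g where g: "g \<in> bounded_lattice_points ?C ?b" "supp g \<subseteq> supp v"
      using exists_bounded_lattice_point_le[OF I rows less.prems False] by blast
    then have g_cone: "g \<in> ?C" and "g \<noteq> (\<lambda>x. 0)" by (auto simp: bounded_lattice_points_def)
    then obtain x1 where "g x1 \<noteq> 0" by auto
    then have "0 < g x1" using kernel_coneD(2)[OF g_cone, of x1] by simp
    then obtain \<mu> x0 where \<mu>: "0 < \<mu>" "(\<lambda>x. v x - \<mu> * g x) \<in> ?C"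
      and x0: "x0 \<in> supp v" "v x0 - \<mu> * g x0 = 0"
      using kernel_cone_diff_multiple[OF I less.prems g(2) kernel_coneD(3)[OF g_cone]] by blast
    let ?v' = "\<lambda>x. v x - \<mu> * g x"
    have "supp ?v' \<subseteq> supp v - {x0}"
      using x0(2) subsetD[OF g(2)] by force
    then have smaller: "card (supp ?v') < card (supp v)"
      using x0(1) finite_supp_kernel_cone[OF I less.prems]
      by (meson card_Diff1_less card_mono finite_Diff order_le_less_trans)
    then obtain gs where gs: "length gs \<le> card (supp ?v')"
      "\<forall>(g, c)\<in>set gs. g \<in> bounded_lattice_points ?C ?b \<and> 0 \<le> c" "?v' = (\<lambda>x. \<Sum>(g, c)\<leftarrow>gs. c * g x)"
      using less.hyps \<mu>(2) by blast
    show ?thesis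
    proof (intro exI[of _ "(g, \<mu>) # gs"] conjI)
      show "length ((g, \<mu>) # gs) \<le> card (supp v)" using gs(1) smaller by simp
      show "\<forall>(g, c)\<in>set ((g, \<mu>) # gs). g \<in> bounded_lattice_points ?C ?b \<and> 0 \<le> c"
        using gs(2) g(1) \<mu>(1) by auto
      show "v = (\<lambda>x. \<Sum>(g, c)\<leftarrow>(g, \<mu>) # gs. c * g x)"
        using fun_cong[OF gs(3), symmetric] by (simp add: fun_eq_iff)
    qed
  qed
qed

lemma min_hilbert_basis_eq_summand:
  assumes h: "h \<in> min_hilbert_basis (kernel_cone I Rows)"
    and gs: "\<forall>(g, c)\<in>set gs. g \<in> kernel_cone I Rows \<and> 0 \<le> c" "h = (\<lambda>x. \<Sum>(g, c)\<leftarrow>gs. c * g x)"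
    and gc: "(g, c) \<in> set gs" "1 \<le> c" and g: "integral_vec g" "g \<noteq> (\<lambda>x. 0)"
  shows "h = g"
proof -
  let ?C = "kernel_cone I Rows"
  define d where "d = (\<lambda>x. h x - g x)"
  have g_cone: "g \<in> ?C" using gs(1) gc(1) by auto
  have "h y = c * g y + (\<Sum>(g, c)\<leftarrow>remove1 (g, c) gs. c * g y)" for y
    using sum_list_map_remove1[OF gc(1), of "\<lambda>(g, c). c * g y"] by (simp add: gs(2))
  then have "d = (\<lambda>x. (c - 1) * g x + (\<Sum>(g, c)\<leftarrow>remove1 (g, c) gs. c * g x))"
    by (simp add: d_def fun_eq_iff algebra_simps)
  moreover have "(\<lambda>x. \<Sum>(g, c)\<leftarrow>remove1 (g, c) gs. c * g x) \<in> ?C"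
    using gs(1) set_remove1_subset[of "(g, c)" gs] by (intro kernel_cone_sum_list) auto
  ultimately have "d \<in> ?C" using kernel_cone_add[OF kernel_cone_scale[OF g_cone]] gc(2) by simp
  moreover have "integral_vec d"
    using h g(1) by (simp add: min_hilbert_basis_def integral_vec_def d_def Ints_diff)
  moreover have "h = (\<lambda>x. g x + d x)" by (simp add: d_def)
  ultimately have "d = (\<lambda>x. 0)" using h g_cone g unfolding min_hilbert_basis_def by blast
  then show ?thesis by (simp add: d_def fun_eq_iff)
qed

lemma min_hilbert_basis_kernel_cone_le:
  assumes I: "finite I" and rows: "integral_rows_norm_le B Rows" "0 < B"
    and h: "h \<in> min_hilbert_basis (kernel_cone I Rows)"
  shows "h x \<le> real (card I * B ^ (card I - 1))"
proof -
  let ?C = "kernel_cone I Rows" and ?b = "real B ^ (card I - 1)"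
  have h_cone: "h \<in> ?C" and "h \<noteq> (\<lambda>x. 0)" using h by (auto simp: min_hilbert_basis_def)
  obtain gs where gs: "length gs \<le> card (supp h)"
    "\<forall>(g, c)\<in>set gs. g \<in> bounded_lattice_points ?C ?b \<and> 0 \<le> c" "h = (\<lambda>x. \<Sum>(g, c)\<leftarrow>gs. c * g x)"
    using kernel_cone_decomposition[OF I rows h_cone] by blast
  have "card (supp h) \<le> card I" using card_mono[OF I kernel_coneD(1)[OF h_cone]] .
  moreover have "supp h \<noteq> {}" using \<open>h \<noteq> (\<lambda>x. 0)\<close> by (simp add: supp_eq_empty_iff)
  then have "0 < card (supp h)" using finite_supp_kernel_cone[OF I h_cone] by (simp add: card_gt_0_iff)
  ultimately have "length gs \<le> card I" "1 \<le> card I" using gs(1) by linarith+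
  show ?thesis
  proof (cases "\<exists>(g, c)\<in>set gs. 1 \<le> c")
    case True
    then obtain g c where gc: "(g, c) \<in> set gs" "1 \<le> c" by blast
    then have g: "integral_vec g" "g \<noteq> (\<lambda>x. 0)" "\<forall>x. g x \<le> ?b"
      using gs(2) by (auto simp: bounded_lattice_points_def)
    have "\<forall>(g, c)\<in>set gs. g \<in> ?C \<and> 0 \<le> c" using gs(2) by (auto simp: bounded_lattice_points_def)
    then have "h x = g x" using min_hilbert_basis_eq_summand[OF h _ gs(3) gc g(1,2)] by simp
    also have "\<dots> \<le> 1 * ?b" using g(3) by simp
    also have "\<dots> \<le> card I * ?b" using \<open>1 \<le> card I\<close> by (intro mult_right_mono) auto
    finally show ?thesis by simp
  next
    case False
    have "h x = (\<Sum>(g, c)\<leftarrow>gs. c * g x)" by (simp add: gs(3))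
    also have "\<dots> \<le> (\<Sum>p\<leftarrow>gs. ?b)"
    proof (rule sum_list_mono)
      fix p assume "p \<in> set gs"
      moreover obtain g c where p: "p = (g, c)" by fastforce
      ultimately have "g \<in> ?C" "g x \<le> ?b" "0 \<le> c" "c < 1"
        using gs(2) False by (auto simp: bounded_lattice_points_def)
      then have "c * g x \<le> 1 * ?b" using kernel_coneD(2) by (intro mult_mono) auto
      then show "(case p of (g, c) \<Rightarrow> c * g x) \<le> ?b" using p by simp
    qed
    also have "\<dots> = length gs * ?b" by (simp add: sum_list_triv)
    also have "\<dots> \<le> card I * ?b" using \<open>length gs \<le> card I\<close> by (intro mult_right_mono) auto
    finally show ?thesis by simp
  qed
qed

lemma finite_card_bounded_integral_vecs:
  assumes I: "finite I"
    and H: "\<And>h. h \<in> H \<Longrightarrow> integral_vec h \<and> supp h \<subseteq> I \<and> (\<forall>x. 0 \<le> h x \<and> h x \<le> real N)"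
  shows "finite H \<and> card H \<le> (N + 1) ^ card I"
proof -
  let ?f = "\<lambda>h. restrict (\<lambda>x. nat \<lfloor>h x\<rfloor>) I" and ?P = "PiE I (\<lambda>_. {0..N})"
  have nat_floor: "real (nat \<lfloor>h x\<rfloor>) = h x" if h: "h \<in> H" for h x
  proof -
    have "h x \<in> \<int>" using H[OF h] by (simp add: integral_vec_def)
    then obtain n where "h x = of_int n" by (rule Ints_cases)
    moreover have "0 \<le> h x" using H[OF h] by simp
    ultimately show ?thesis by simp
  qed
  have vanish: "h x = 0" if "h \<in> H" "x \<notin> I" for h x
    using subsetD[of "supp h" I x] H[OF that(1)] that(2) by auto
  have inj: "inj_on ?f H"
  proof (rule inj_onI)
    fix h h' assume hh: "h \<in> H" "h' \<in> H" "?f h = ?f h'"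
    show "h = h'"
    proof
      fix x show "h x = h' x"
      proof (cases "x \<in> I")
        case True
        then have "nat \<lfloor>h x\<rfloor> = nat \<lfloor>h' x\<rfloor>" using fun_cong[OF hh(3), of x] by simp
        then show ?thesis using nat_floor hh(1,2) by metis
      next
        case False
        then show ?thesis using vanish[OF hh(1) False] vanish[OF hh(2) False] by simp
      qed
    qed
  qed
  moreover have sub: "?f ` H \<subseteq> ?P"
  proof
    fix u assume "u \<in> ?f ` H"
    then obtain h where "h \<in> H" "u = ?f h" by blast
    moreover have "nat \<lfloor>h x\<rfloor> \<le> N" if "h \<in> H" for h x
    proof -
      have "h x \<le> real N" using H[OF that] by blast
      then have "real (nat \<lfloor>h x\<rfloor>) \<le> real N" by (simp only: nat_floor[OF that])
      then show ?thesis by (simp only: of_nat_le_iff)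
    qed
    ultimately show "u \<in> ?P" by auto
  qed
  moreover have "finite ?P" "card ?P = (N + 1) ^ card I" using I by (simp_all add: finite_PiE card_PiE)
  ultimately show ?thesis using inj_on_finite[OF inj sub] card_inj_on_le[OF inj sub] by simp
qed

theorem card_min_hilbert_basis_kernel_cone_le:
  assumes I: "finite I" and rows: "integral_rows_norm_le B Rows" "0 < B"
  shows "finite (min_hilbert_basis (kernel_cone I Rows)) \<and>
         card (min_hilbert_basis (kernel_cone I Rows)) \<le> (card I * B ^ (card I - 1) + 1) ^ card I"
proof (rule finite_card_bounded_integral_vecs[OF I])
  fix h assume h: "h \<in> min_hilbert_basis (kernel_cone I Rows)"
  then have h_cone: "h \<in> kernel_cone I Rows" and "integral_vec h" by (auto simp: min_hilbert_basis_def)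
  then show "integral_vec h \<and> supp h \<subseteq> I \<and> (\<forall>x. 0 \<le> h x \<and> h x \<le> real (card I * B ^ (card I - 1)))"
    using kernel_coneD(1,2)[OF h_cone] min_hilbert_basis_kernel_cone_le[OF I rows h] by simp
qed

section \<open>The Haken normal cone\<close>

definition arc_row :: "'a \<Rightarrow> 'a \<Rightarrow> 'a \<Rightarrow> 'a \<Rightarrow> 'a \<Rightarrow> real" where
  "arc_row a b c d x = of_bool (x = a) + of_bool (x = b) - of_bool (x = c) - of_bool (x = d)"

definition matching_rows :: "nat \<Rightarrow> gluing \<Rightarrow> (nat \<times> nat \<Rightarrow> real) set" where
  "matching_rows t gl = {arc_row (i, c) (i, quad_type c f) (j, s c) (j, quad_type (s c) (s f)) | i f j s c.
     i < t \<and> f < 4 \<and> gl i f = Some (j, s) \<and> c < 4 \<and> c \<noteq> f}"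

lemma sum_of_bool_mult:
  assumes "finite X" "supp v \<subseteq> X"
  shows "(\<Sum>x\<in>X. of_bool (x = a) * v x) = v a"
proof -
  have "(\<Sum>x\<in>X. of_bool (x = a) * v x) = (\<Sum>x\<in>X. if x = a then v a else 0)"
    by (intro sum.cong) auto
  also have "\<dots> = (if a \<in> X then v a else 0)" using assms(1) by (simp add: sum.delta')
  also have "\<dots> = v a" using subsetD[OF assms(2), of a] by auto
  finally show ?thesis .
qed

lemma sum_arc_row_mult:
  assumes "finite X" "supp v \<subseteq> X"
  shows "(\<Sum>x\<in>X. arc_row a b c d x * v x) = v a + v b - v c - v d"
  using sum_of_bool_mult[OF assms]
  by (simp add: arc_row_def algebra_simps sum.distrib sum_subtractf)

lemma matching_iff_in_null_space:
  assumes "supp v \<subseteq> coord_index t"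
  shows "matching t gl v \<longleftrightarrow> in_null_space (coord_index t) (matching_rows t gl) v"
proof -
  have "finite (coord_index t)" by (simp add: coord_index_def)
  then have row: "(\<Sum>x\<in>coord_index t. arc_row a b c d x * v x) = 0 \<longleftrightarrow> v a + v b = v c + v d"
    for a b c d
    using sum_arc_row_mult[OF _ assms] by (simp add: diff_eq_eq add.commute)
  show ?thesis
  proof
    assume m: "matching t gl v"
    show "in_null_space (coord_index t) (matching_rows t gl) v"
      unfolding in_null_space_def matching_rows_def
    proof (intro ballI, elim CollectE exE conjE)
      fix \<rho> i f j s c
      assume \<rho>: "\<rho> = arc_row (i, c) (i, quad_type c f) (j, s c) (j, quad_type (s c) (s f))"
        and "i < t" "f < 4" "gl i f = Some (j, s)" "c < 4" "c \<noteq> f"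
      then have "v (i, c) + v (i, quad_type c f) = v (j, s c) + v (j, quad_type (s c) (s f))"
        using m unfolding matching_def by blast
      then show "(\<Sum>x\<in>coord_index t. \<rho> x * v x) = 0" using row \<rho> by simp
    qed
  next
    assume n: "in_null_space (coord_index t) (matching_rows t gl) v"
    show "matching t gl v"
      unfolding matching_def
    proof (intro allI impI)
      fix i f j s c assume "i < t" "f < 4" "gl i f = Some (j, s)" "c < 4" "c \<noteq> f"
      then have "arc_row (i, c) (i, quad_type c f) (j, s c) (j, quad_type (s c) (s f)) \<in> matching_rows t gl"
        unfolding matching_rows_def by blast
      then show "v (i, c) + v (i, quad_type c f) = v (j, s c) + v (j, quad_type (s c) (s f))"
        using n row unfolding in_null_space_def by blast
    qed
  qed
qed

lemma haken_cone_eq_kernel_cone: "haken_cone t gl = kernel_cone (coord_index t) (matching_rows t gl)"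
  unfolding haken_cone_def kernel_cone_def
proof (rule Collect_cong)
  fix v :: "nat \<times> nat \<Rightarrow> real"
  have supp: "supp v \<subseteq> coord_index t \<longleftrightarrow> (\<forall>x. x \<notin> coord_index t \<longrightarrow> v x = 0)"
    unfolding subset_iff mem_supp_iff by blast
  have "(\<forall>x. 0 \<le> v x) \<longleftrightarrow> (\<forall>x\<in>coord_index t. 0 \<le> v x)" if "supp v \<subseteq> coord_index t"
    using that supp by (metis order_refl)
  then show "((\<forall>x. x \<notin> coord_index t \<longrightarrow> v x = 0) \<and> (\<forall>x\<in>coord_index t. 0 \<le> v x) \<and> matching t gl v) \<longleftrightarrow>
    (supp v \<subseteq> coord_index t \<and> (\<forall>x. 0 \<le> v x) \<and> in_null_space (coord_index t) (matching_rows t gl) v)"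
    using supp matching_iff_in_null_space[of v t gl] by blast
qed

lemma sum_arc_row_squared_le:
  assumes "a \<noteq> b" "c \<noteq> d" "finite X"
  shows "(\<Sum>x\<in>X. (arc_row a b c d x)\<^sup>2) \<le> 4"
proof -
  let ?n = "\<lambda>x. of_bool (x = a) + of_bool (x = b) + of_bool (x = c) + of_bool (x = d) :: real"
  have "(\<Sum>x\<in>X. (arc_row a b c d x)\<^sup>2) \<le> (\<Sum>x\<in>X. ?n x)"
    using assms(1,2) by (intro sum_mono) (auto simp: arc_row_def power2_eq_square)
  also have "\<dots> = of_bool (a \<in> X) + of_bool (b \<in> X) + of_bool (c \<in> X) + of_bool (d \<in> X)"
    using assms(3) by (simp add: sum.distrib of_bool_def sum.delta)
  also have "\<dots> \<le> 4" by simp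
  finally show ?thesis .
qed

lemma quad_type_ge_4: "a < 4 \<Longrightarrow> b < 4 \<Longrightarrow> a \<noteq> b \<Longrightarrow> 4 \<le> quad_type a b"
  unfolding quad_type_def by auto

lemma integral_rows_norm_le_matching_rows:
  assumes "valid_gluing t gl"
  shows "integral_rows_norm_le 2 (matching_rows t gl)"
  unfolding integral_rows_norm_le_def
proof (intro ballI conjI allI impI)
  fix \<rho> assume "\<rho> \<in> matching_rows t gl"
  then obtain i f j s c where \<rho>: "\<rho> = arc_row (i, c) (i, quad_type c f) (j, s c) (j, quad_type (s c) (s f))"
    and ifjsc: "i < t" "f < 4" "gl i f = Some (j, s)" "c < 4" "c \<noteq> f"
    unfolding matching_rows_def by blast
  show "\<rho> x \<in> \<int>" for x by (simp add: \<rho> arc_row_def)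
  have "bij_betw s {..<4} {..<4}" using assms ifjsc unfolding valid_gluing_def by blast
  then have "s c < 4" "s f < 4" "s c \<noteq> s f" using ifjsc(2,4,5) by (auto simp: bij_betw_def inj_on_def)
  then have "(i, c) \<noteq> (i, quad_type c f)" "(j, s c) \<noteq> (j, quad_type (s c) (s f))"
    using quad_type_ge_4[of c f] quad_type_ge_4[of "s c" "s f"] ifjsc by auto
  then show "(\<Sum>x\<in>X. (\<rho> x)\<^sup>2) \<le> (real 2)\<^sup>2" if "finite X" for X
    using sum_arc_row_squared_le[OF _ _ that] by (simp add: \<rho>)
qed

lemma card_coord_index: "card (coord_index t) = 7 * t"
  by (simp add: coord_index_def card_cartesian_product)

lemma hilbert_basis_count_le:
  "(7 * t * 2 ^ (7 * t - 1) + 1) ^ (7 * t) \<le> t ^ (7 * t) * (2::nat) ^ (49 * t\<^sup>2 + 14 * t)"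
proof (cases "t = 0")
  case False
  then obtain m where m: "7 * t = Suc m" by (cases "7 * t") auto
  have "1 \<le> t * 2 ^ m" using False by simp
  then have "7 * t * 2 ^ (7 * t - 1) + 1 \<le> 7 * t * 2 ^ m + t * 2 ^ m" using m by simp
  also have "\<dots> = t * (8 * 2 ^ m)" by simp
  also have "8 * 2 ^ m = (2::nat) ^ (7 * t + 2)" using m by simp
  finally have "7 * t * 2 ^ (7 * t - 1) + 1 \<le> t * 2 ^ (7 * t + 2)" .
  then have "(7 * t * 2 ^ (7 * t - 1) + 1) ^ (7 * t) \<le> (t * 2 ^ (7 * t + 2)) ^ (7 * t)"
    by (rule power_mono) simp
  also have "\<dots> = t ^ (7 * t) * 2 ^ ((7 * t + 2) * (7 * t))"
    by (simp only: power_mult_distrib power_mult)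
  also have "(7 * t + 2) * (7 * t) = 49 * t\<^sup>2 + 14 * t"
    by (simp add: power2_eq_square algebra_simps)
  finally show ?thesis .
qed simp

theorem lemma6p2:
  fixes t :: nat and gl :: gluing
  assumes "is_3manifold_triangulation t gl"
  shows "finite {v. min_vertex_solution (haken_cone t gl) v} \<and>
         card {v. min_vertex_solution (haken_cone t gl) v} \<le> 2 ^ (7 * t) \<and>
         finite (min_hilbert_basis (haken_cone t gl)) \<and>
         card (min_hilbert_basis (haken_cone t gl)) \<le> t ^ (7 * t) * 2 ^ (49 * t\<^sup>2 + 14 * t)"
proof -
  let ?I = "coord_index t" and ?R = "matching_rows t gl"
  have I: "finite ?I" by (simp add: coord_index_def)
  have rows: "integral_rows_norm_le 2 ?R"
    using assms by (intro integral_rows_norm_le_matching_rows) (simp add: is_3manifold_triangulation_def)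
  have "card (min_hilbert_basis (kernel_cone ?I ?R)) \<le> (7 * t * 2 ^ (7 * t - 1) + 1) ^ (7 * t)"
    using card_min_hilbert_basis_kernel_cone_le[OF I rows] by (simp add: card_coord_index)
  also have "\<dots> \<le> t ^ (7 * t) * 2 ^ (49 * t\<^sup>2 + 14 * t)" by (rule hilbert_basis_count_le)
  finally show ?thesis
    using card_min_vertex_solutions_le[OF I, of ?R] card_min_hilbert_basis_kernel_cone_le[OF I rows]
    by (simp add: haken_cone_eq_kernel_cone card_coord_index)
qed

end
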